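(* In the setting below, if the minimal semigroup $\{P(t)\}_{t\ge0}$ has an invariant density $\tilde f$ with $\tilde f>0$ $m$-a.e., then $\{P(t)\}_{t\ge0}$ is stochastic.
   Context: Setting: $(E,\mathcal{E},m)$ is a $\sigma$-finite measure space, $L^1=L^1(E,\mathcal{E},m)$, $L^1_+$ its nonnegative elements, $D(m)=\{f\in L^1_+:\|f\|=1\}$ the densities. A linear operator on $L^1$ is stochastic if it maps $D(m)$ into $D(m)$, substochastic if it is a positive contraction; a (sub)stochastic semigroup is a $C_0$-semigroup of (sub)stochastic operators. A substochastic operator $Q$ is extended to nonnegative measurable $f=\sup_n f_n$ ($0\le f_n\uparrow$, $f_n\in L^1_+$) by $Qf=\sup_nQf_n$ (possibly $+\infty$); $f\ge0$ measurable is subinvariant (invariant) for $Q$ if $Qf\le f$ ($Qf=f$), and for a semigroup if this holds for each $P(t)$. Let $P$ be a stochastic operator on $L^1$, $\varphi\colon E\to[0,\infty)$ measurable, and $\{S(t)\}_{t\ge0}$ a substochastic semigroup with generator $(A,\mathcal{D}(A))$ such that $\mathcal{D}(A)\subseteq L^1_\varphi=\{f\in L^1:\int\varphi|f|\,dm<\infty\}$ and $\int_E Af\,dm=-\int_E\varphi f\,dm$ for all $f\in\mathcal{D}(A)\cap L^1_+$. $R(\lambda,A)=(\lambda-A)^{-1}=\int_0^\infty e^{-\lambda s}S(s)\,ds$ for $\lambda>0$. The minimal semigroup $\{P(t)\}_{t\ge0}$ is the substochastic semigroup whose generator $(\mathcal{C},\mathcal{D}(\mathcal{C}))$ is given by $R(\lambda,\mathcal{C})f=\lim_{n\to\infty}R(\lambda,A)\sum_{k=0}^n(P(\varphi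 R(\lambda,A)))^kf$ for $f\in L^1$, $\lambda>0$; it satisfies $\mathcal{D}(A)\subseteq\mathcal{D}(\mathcal{C})$ and $\mathcal{C}f=Af+P(\varphi f)$ for $f\in\mathcal{D}(A)$. *)

theory Defs
  imports "HOL-Analysis.Analysis"
begin

text \<open>Elements of L1(E,F,m) are represented by integrable real functions on the
  measure space M; everything is understood up to m-a.e. equality.\<close>

definition aeq :: "'a measure \<Rightarrow> ('a \<Rightarrow> real) \<Rightarrow> ('a \<Rightarrow> real) \<Rightarrow> bool" where
  "aeq M f g \<longleftrightarrow> (AE x in M. f x = g x)"

definition l1norm :: "'a measure \<Rightarrow> ('a \<Rightarrow> real) \<Rightarrow> real" where
  "l1norm M f = (LINT x|M. \<bar>f x\<bar>)"

definition L1op :: "'a measure \<Rightarrow> (('a \<Rightarrow> real) \<Rightarrow> ('a \<Rightarrow> real)) \<Rightarrow> bool" where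
  "L1op M T \<longleftrightarrow>
     (\<forall>f. integrable M f \<longrightarrow> integrable M (T f)) \<and>
     (\<forall>f g. integrable M f \<longrightarrow> integrable M g \<longrightarrow> aeq M f g \<longrightarrow> aeq M (T f) (T g)) \<and>
     (\<forall>f g a b. integrable M f \<longrightarrow> integrable M g \<longrightarrow>
        aeq M (T (\<lambda>x. a * f x + b * g x)) (\<lambda>x. a * T f x + b * T g x))"

definition density_fun :: "'a measure \<Rightarrow> ('a \<Rightarrow> real) \<Rightarrow> bool" where
  "density_fun M f \<longleftrightarrow> integrable M f \<and> (AE x in M. 0 \<le> f x) \<and> integral\<^sup>L M f = 1"

definition stochastic_op :: "'a measure \<Rightarrow> (('a \<Rightarrow> real) \<Rightarrow> ('a \<Rightarrow> real)) \<Rightarrow> bool" where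
  "stochastic_op M T \<longleftrightarrow> L1op M T \<and> (\<forall>f. density_fun M f \<longrightarrow> density_fun M (T f))"

definition substochastic_op :: "'a measure \<Rightarrow> (('a \<Rightarrow> real) \<Rightarrow> ('a \<Rightarrow> real)) \<Rightarrow> bool" where
  "substochastic_op M T \<longleftrightarrow> L1op M T \<and>
     (\<forall>f. integrable M f \<longrightarrow> (AE x in M. 0 \<le> f x) \<longrightarrow> (AE x in M. 0 \<le> T f x)) \<and>
     (\<forall>f. integrable M f \<longrightarrow> l1norm M (T f) \<le> l1norm M f)"

text \<open>C0-semigroups on L1 (only times t \<ge> 0 are relevant).\<close>
definition c0_semigroup :: "'a measure \<Rightarrow> (real \<Rightarrow> ('a \<Rightarrow> real) \<Rightarrow> ('a \<Rightarrow> real)) \<Rightarrow> bool" where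
  "c0_semigroup M S \<longleftrightarrow>
     (\<forall>t\<ge>0. L1op M (S t)) \<and>
     (\<forall>f. integrable M f \<longrightarrow> aeq M (S 0 f) f) \<and>
     (\<forall>s t f. 0 \<le> s \<longrightarrow> 0 \<le> t \<longrightarrow> integrable M f \<longrightarrow> aeq M (S (s + t) f) (S s (S t f))) \<and>
     (\<forall>f. integrable M f \<longrightarrow> ((\<lambda>t. l1norm M (\<lambda>x. S t f x - f x)) \<longlongrightarrow> 0) (at_right 0))"

definition substochastic_semigroup :: "'a measure \<Rightarrow> (real \<Rightarrow> ('a \<Rightarrow> real) \<Rightarrow> ('a \<Rightarrow> real)) \<Rightarrow> bool" where
  "substochastic_semigroup M S \<longleftrightarrow> c0_semigroup M S \<and> (\<forall>t\<ge>0. substochastic_op M (S t))"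

definition stochastic_semigroup :: "'a measure \<Rightarrow> (real \<Rightarrow> ('a \<Rightarrow> real) \<Rightarrow> ('a \<Rightarrow> real)) \<Rightarrow> bool" where
  "stochastic_semigroup M S \<longleftrightarrow> c0_semigroup M S \<and> (\<forall>t\<ge>0. stochastic_op M (S t))"

definition is_generator :: "'a measure \<Rightarrow> (real \<Rightarrow> ('a \<Rightarrow> real) \<Rightarrow> ('a \<Rightarrow> real))
    \<Rightarrow> ('a \<Rightarrow> real) set \<Rightarrow> (('a \<Rightarrow> real) \<Rightarrow> ('a \<Rightarrow> real)) \<Rightarrow> bool" where
  "is_generator M S D A \<longleftrightarrow>
     D \<subseteq> {f. integrable M f} \<and>
     (\<forall>f. integrable M f \<longrightarrow>
        (f \<in> D \<longleftrightarrow> (\<exists>g. integrable M g \<and>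
           ((\<lambda>t. l1norm M (\<lambda>x. (S t f x - f x) / t - g x)) \<longlongrightarrow> 0) (at_right 0)))) \<and>
     (\<forall>f\<in>D. integrable M (A f) \<and>
        ((\<lambda>t. l1norm M (\<lambda>x. (S t f x - f x) / t - A f x)) \<longlongrightarrow> 0) (at_right 0))"

definition is_resolvent :: "'a measure \<Rightarrow> ('a \<Rightarrow> real) set \<Rightarrow> (('a \<Rightarrow> real) \<Rightarrow> ('a \<Rightarrow> real))
    \<Rightarrow> (real \<Rightarrow> ('a \<Rightarrow> real) \<Rightarrow> ('a \<Rightarrow> real)) \<Rightarrow> bool" where
  "is_resolvent M D A R \<longleftrightarrow>
     (\<forall>lam>0. \<forall>f. integrable M f \<longrightarrow>
        R lam f \<in> D \<and> aeq M (\<lambda>x. lam * R lam f x - A (R lam f) x) f)"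

end

theory Submission
  imports Defs
begin

text \<open>Only substochasticity of each \<open>P(t)\<close> and the invariant density \<open>ft\<close> matter.  For a
  density \<open>f\<close>, the truncations \<open>min f (n ft)\<close> converge to \<open>f\<close> because \<open>ft > 0\<close> a.e.  A positive
  contraction \<open>T\<close> cannot increase the integral of the nonnegative remainder \<open>n ft - min f (n ft)\<close>,
  while it preserves the integral of \<open>n ft\<close>; hence \<open>\<integral> T (min f (n ft)) \<ge> \<integral> min f (n ft)\<close>.  Letting
  \<open>n \<rightarrow> \<infinity>\<close> and using positivity gives \<open>\<integral> T f \<ge> \<integral> f\<close>; contractivity gives the reverse.\<close>

lemma l1norm_eq_integral_nonneg:
  assumes "integrable M g" "AE x in M. 0 \<le> g x"
  shows "l1norm M g = integral\<^sup>L M g"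
  unfolding l1norm_def by (rule integral_cong_AE) (use assms in auto)

lemma integral_cong_aeq:
  assumes "integrable M f" "integrable M g" "aeq M f g"
  shows "integral\<^sup>L M f = integral\<^sup>L M g"
  using assms unfolding aeq_def by (intro integral_cong_AE) auto

lemma L1op_integral_lincomb:
  assumes T: "L1op M T" and g: "integrable M g" and h: "integrable M h"
  shows "integral\<^sup>L M (T (\<lambda>x. a * g x + b * h x)) = a * integral\<^sup>L M (T g) + b * integral\<^sup>L M (T h)"
proof -
  have Ti: "\<And>u. integrable M u \<Longrightarrow> integrable M (T u)"
    and lin: "aeq M (T (\<lambda>x. a * g x + b * h x)) (\<lambda>x. a * T g x + b * T h x)"
    using T g h unfolding L1op_def by auto
  have "integrable M (\<lambda>x. a * g x + b * h x)" using g h by auto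
  then have "integral\<^sup>L M (T (\<lambda>x. a * g x + b * h x)) = integral\<^sup>L M (\<lambda>x. a * T g x + b * T h x)"
    using Ti g h lin by (intro integral_cong_aeq) auto
  also have "\<dots> = a * integral\<^sup>L M (T g) + b * integral\<^sup>L M (T h)"
    using Ti g h by simp
  finally show ?thesis .
qed

lemma substochastic_integral_nonneg:
  assumes "substochastic_op M T" "integrable M g" "AE x in M. 0 \<le> g x"
  shows "0 \<le> integral\<^sup>L M (T g)"
  using assms unfolding substochastic_op_def by (auto intro: integral_nonneg_AE)

lemma substochastic_integral_le:
  assumes T: "substochastic_op M T" and g: "integrable M g" "AE x in M. 0 \<le> g x"
  shows "integral\<^sup>L M (T g) \<le> integral\<^sup>L M g"
proof -
  have "integrable M (T g)" "AE x in M. 0 \<le> T g x" "l1norm M (T g) \<le> l1norm M g"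
    using T g unfolding substochastic_op_def L1op_def by auto
  then show ?thesis using g by (simp add: l1norm_eq_integral_nonneg)
qed

lemma substochastic_integral_mono:
  assumes T: "substochastic_op M T" and g: "integrable M g" and f: "integrable M f"
    and le: "AE x in M. g x \<le> f x"
  shows "integral\<^sup>L M (T g) \<le> integral\<^sup>L M (T f)"
proof -
  have L: "L1op M T" using T unfolding substochastic_op_def by auto
  have d: "integrable M (\<lambda>x. f x - g x)" using f g by auto
  have "(\<lambda>x. 1 * g x + 1 * (f x - g x)) = f" by auto
  then have "integral\<^sup>L M (T f) = integral\<^sup>L M (T g) + integral\<^sup>L M (T (\<lambda>x. f x - g x))"
    using L1op_integral_lincomb[OF L g d, of 1 1] by simp
  moreover have "0 \<le> integral\<^sup>L M (T (\<lambda>x. f x - g x))"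
    using le by (intro substochastic_integral_nonneg[OF T d]) auto
  ultimately show ?thesis by linarith
qed

lemma substochastic_integral_ge_below_preserved:
  assumes T: "substochastic_op M T" and u: "integrable M u" and g: "integrable M g"
    and le: "AE x in M. g x \<le> u x" and preserved: "integral\<^sup>L M (T u) = integral\<^sup>L M u"
  shows "integral\<^sup>L M g \<le> integral\<^sup>L M (T g)"
proof -
  have L: "L1op M T" using T unfolding substochastic_op_def by auto
  have d: "integrable M (\<lambda>x. u x - g x)" using u g by auto
  have "(\<lambda>x. 1 * g x + 1 * (u x - g x)) = u" by auto
  then have "integral\<^sup>L M (T u) = integral\<^sup>L M (T g) + integral\<^sup>L M (T (\<lambda>x. u x - g x))"
    using L1op_integral_lincomb[OF L g d, of 1 1] by simp
  moreover have "integral\<^sup>L M (T (\<lambda>x. u x - g x)) \<le> integral\<^sup>L M (\<lambda>x. u x - g x)"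
    using le by (intro substochastic_integral_le[OF T d]) auto
  ultimately show ?thesis using preserved u g by simp
qed

lemma integral_min_mult_positive_tendsto:
  assumes f: "integrable M f" and u: "integrable M u" and pos: "AE x in M. 0 < u x"
  shows "(\<lambda>n. integral\<^sup>L M (\<lambda>x. min (f x) (real n * u x))) \<longlonglongrightarrow> integral\<^sup>L M f"
proof (rule integral_dominated_convergence[where w = "\<lambda>x. \<bar>f x\<bar>"])
  show "AE x in M. (\<lambda>n. min (f x) (real n * u x)) \<longlonglongrightarrow> f x"
    using pos
  proof eventually_elim
    case (elim x)
    obtain N :: nat where N: "f x / u x \<le> real N" using real_arch_simple by blast
    have "min (f x) (real n * u x) = f x" if "N \<le> n" for n
    proof -
      have "f x / u x \<le> real n" using N that by (meson of_nat_le_iff order_trans)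
      then show ?thesis using elim by (simp add: divide_le_eq)
    qed
    then show ?case
      by (intro tendsto_eventually) (auto simp: eventually_sequentially)
  qed
  show "AE x in M. norm (min (f x) (real n * u x)) \<le> \<bar>f x\<bar>" for n
    using pos
  proof eventually_elim
    case (elim x)
    then have "0 \<le> real n * u x" by simp
    then show ?case by (auto simp: min_def)
  qed
qed (use f u in auto)

theorem substochastic_stochastic_of_positive_invariant:
  assumes T: "substochastic_op M T" and ft: "density_fun M ft"
    and pos: "AE x in M. 0 < ft x" and inv: "aeq M (T ft) ft"
  shows "stochastic_op M T"
  unfolding stochastic_op_def
proof (intro conjI allI impI)
  have L: "L1op M T" using T unfolding substochastic_op_def by auto
  then show "L1op M T" .
  fix f assume "density_fun M f"
  then have fi: "integrable M f" and f0: "AE x in M. 0 \<le> f x" and f1: "integral\<^sup>L M f = 1"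
    unfolding density_fun_def by auto
  have fti: "integrable M ft" using ft unfolding density_fun_def by auto
  have Ti: "integrable M (T f)" using L fi unfolding L1op_def by auto
  define h where "h n x = min (f x) (real n * ft x)" for n x
  have hi: "integrable M (h n)" for n unfolding h_def using fi fti by auto
  have "integral\<^sup>L M (T ft) = integral\<^sup>L M ft"
    using L fti inv unfolding L1op_def by (intro integral_cong_aeq) auto
  then have "integral\<^sup>L M (\<lambda>x. real n * ft x) = integral\<^sup>L M (T (\<lambda>x. real n * ft x))" for n
    using L1op_integral_lincomb[OF L fti fti, of "real n" 0] fti by simp
  then have "integral\<^sup>L M (h n) \<le> integral\<^sup>L M (T (h n))" for n
    using fti
    by (intro substochastic_integral_ge_below_preserved[OF T _ hi, of "\<lambda>x. real n * ft x"])
      (auto simp: h_def)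
  moreover have "integral\<^sup>L M (T (h n)) \<le> integral\<^sup>L M (T f)" for n
    by (rule substochastic_integral_mono[OF T hi fi]) (auto simp: h_def)
  moreover have "(\<lambda>n. integral\<^sup>L M (h n)) \<longlonglongrightarrow> 1"
    using integral_min_mult_positive_tendsto[OF fi fti pos] f1 unfolding h_def by simp
  ultimately have "1 \<le> integral\<^sup>L M (T f)"
    by (intro LIMSEQ_le_const2) (auto intro: order_trans)
  moreover have "integral\<^sup>L M (T f) \<le> 1"
    using substochastic_integral_le[OF T fi f0] f1 by simp
  moreover have "AE x in M. 0 \<le> T f x" using T fi f0 unfolding substochastic_op_def by auto
  ultimately show "density_fun M (T f)" using Ti unfolding density_fun_def by auto
qed

theorem mainTheorem6:
  fixes M :: "'a measure"
    and P :: "('a \<Rightarrow> real) \<Rightarrow> ('a \<Rightarrow> real)"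
    and \<phi> :: "'a \<Rightarrow> real"
    and S :: "real \<Rightarrow> ('a \<Rightarrow> real) \<Rightarrow> ('a \<Rightarrow> real)"
    and DA :: "('a \<Rightarrow> real) set"
    and A :: "('a \<Rightarrow> real) \<Rightarrow> ('a \<Rightarrow> real)"
    and RA :: "real \<Rightarrow> ('a \<Rightarrow> real) \<Rightarrow> ('a \<Rightarrow> real)"
    and Pt :: "real \<Rightarrow> ('a \<Rightarrow> real) \<Rightarrow> ('a \<Rightarrow> real)"
    and DC :: "('a \<Rightarrow> real) set"
    and C :: "('a \<Rightarrow> real) \<Rightarrow> ('a \<Rightarrow> real)"
    and RC :: "real \<Rightarrow> ('a \<Rightarrow> real) \<Rightarrow> ('a \<Rightarrow> real)"
    and ft :: "'a \<Rightarrow> real"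
  assumes "sigma_finite_measure M"
    and "stochastic_op M P"
    and "\<phi> \<in> borel_measurable M"
    and "\<forall>x\<in>space M. 0 \<le> \<phi> x"
    and "substochastic_semigroup M S"
    and "is_generator M S DA A"
    and "\<forall>f\<in>DA. integrable M (\<lambda>x. \<phi> x * f x)"
    and "\<forall>f\<in>DA. (AE x in M. 0 \<le> f x) \<longrightarrow>
           integral\<^sup>L M (A f) = - integral\<^sup>L M (\<lambda>x. \<phi> x * f x)"
    and "is_resolvent M DA A RA"
    and "substochastic_semigroup M Pt"
    and "is_generator M Pt DC C"
    and "is_resolvent M DC C RC"
    and "\<forall>lam>0. \<forall>f. integrable M f \<longrightarrow>
           ((\<lambda>n. l1norm M (\<lambda>x.
               RA lam (\<lambda>y. \<Sum>k\<le>n. (((\<lambda>h. P (\<lambda>z. \<phi> z * RA lam h z)) ^^ k) f) y) x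
               - RC lam f x)) \<longlonglongrightarrow> 0)"
    and "density_fun M ft"
    and "AE x in M. 0 < ft x"
    and "\<forall>t\<ge>0. aeq M (Pt t ft) ft"
  shows "stochastic_semigroup M Pt"
proof -
  have "c0_semigroup M Pt" and sub: "\<forall>t\<ge>0. substochastic_op M (Pt t)"
    using \<open>substochastic_semigroup M Pt\<close> unfolding substochastic_semigroup_def by auto
  moreover have "stochastic_op M (Pt t)" if "0 \<le> t" for t
    using substochastic_stochastic_of_positive_invariant sub that assms(14-16) by blast
  ultimately show ?thesis unfolding stochastic_semigroup_def by blast
qed

end
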